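(* Let $R$ be a ring with unity and involution $*$, and let $a\in R$. The following statements are equivalent. (1) $a$ is Moore-Penrose invertible. (2) $a$ is left dual $a^*$-core invertible. (3) $a^*$ is left dual $a$-core invertible. (4) $a$ is left dual $(a^*,a^* )$-core invertible. (5) $a$ is left $(a^*,a^* )$-invertible. (6) $a^*$ is left dual $(a,a)$-core invertible. (7) $a^*$ is left $(a,a)$-invertible.
   Context: $a$ is Moore-Penrose invertible if there exists $x\in R$ with $axa=a$, $xax=x$, $(ax)^*=ax$, $(xa)^*=xa$. For $u,v\in R$, $u$ is left dual $v$-core invertible if there exists $x\in R$ with $uxvu=u$, $(xvu)^*=xvu$ and $x^2vu=x$. For $u,b,c\in R$, $u$ is left dual $(b,c)$-core invertible if there exists $x\in Rc$ with $bxub=b$ and $(xub)^*=xub$; and $u$ is left $(b,c)$-invertible if $b\in Rcub$ (equivalently, there exists $x\in Rc$ with $xub=b$). *)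

theory Defs
  imports Main
begin

definition involution :: "('a::ring_1 \<Rightarrow> 'a) \<Rightarrow> bool" where
  "involution star \<longleftrightarrow>
     (\<forall>x y. star (x + y) = star x + star y) \<and>
     (\<forall>x y. star (x * y) = star y * star x) \<and>
     (\<forall>x. star (star x) = x)"

definition MP_invertible :: "('a::ring_1 \<Rightarrow> 'a) \<Rightarrow> 'a \<Rightarrow> bool" where
  "MP_invertible star a \<longleftrightarrow>
     (\<exists>x. a * x * a = a \<and> x * a * x = x \<and> star (a * x) = a * x \<and> star (x * a) = x * a)"

definition left_dual_core_invertible :: "('a::ring_1 \<Rightarrow> 'a) \<Rightarrow> 'a \<Rightarrow> 'a \<Rightarrow> bool" where
  "left_dual_core_invertible star u v \<longleftrightarrow>
     (\<exists>x. u * x * v * u = u \<and> star (x * v * u) = x * v * u \<and> x ^ 2 * v * u = x)"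

definition left_dual_bc_core_invertible :: "('a::ring_1 \<Rightarrow> 'a) \<Rightarrow> 'a \<Rightarrow> 'a \<Rightarrow> 'a \<Rightarrow> bool" where
  "left_dual_bc_core_invertible star u b c \<longleftrightarrow>
     (\<exists>x. (\<exists>r. x = r * c) \<and> b * x * u * b = b \<and> star (x * u * b) = x * u * b)"

definition left_bc_invertible :: "'a::ring_1 \<Rightarrow> 'a \<Rightarrow> 'a \<Rightarrow> bool" where
  "left_bc_invertible u b c \<longleftrightarrow> (\<exists>r. b = r * c * u * b)"

end

theory Submission
  imports Defs
begin

text \<open>Each condition says, once the involution is applied to its defining equation, that
  \<open>a \<in> a a\<^sup>* a R\<close> or that \<open>a\<^sup>* \<in> a\<^sup>* a a\<^sup>* R\<close>; e.g. from \<open>u x v u = u\<close> with \<open>x v u\<close> hermitian,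
  \<open>u = u (x v u)\<^sup>* = u u\<^sup>* v\<^sup>* x\<^sup>*\<close>. Conversely \<open>a = a a\<^sup>* a s\<close> gives \<open>a \<in> a a\<^sup>* R \<inter> R a\<^sup>* a\<close>, hence a
  \<open>{1,4}\<close>-inverse \<open>z\<close> and a \<open>{1,3}\<close>-inverse \<open>w\<close> of \<open>a\<close>, and \<open>z a w\<close> is its Moore-Penrose inverse.
  If \<open>y\<close> is the Moore-Penrose inverse of \<open>a\<close>, then \<open>y y\<^sup>*\<close> witnesses the core-type conditions.\<close>

context
  fixes star :: "'a::ring_1 \<Rightarrow> 'a"
  assumes involution: "involution star"
begin

lemma star_mult [simp]: "star (x * y) = star y * star x"
  using involution by (simp add: involution_def)

lemma star_star [simp]: "star (star x) = x"
  using involution by (simp add: involution_def)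

lemma eq_mult_star_if_hermitian_right_unit:
  assumes "u * (q * u) = u" and "star (q * u) = q * u"
  shows "u = u * star u * star q"
proof -
  have "u = u * star (q * u)" using assms by simp
  then show ?thesis by (simp add: mult.assoc)
qed

lemma left_dual_core_invertible_imp_right_factor:
  assumes "left_dual_core_invertible star u v"
  shows "\<exists>s. u = u * star u * star v * s"
proof -
  obtain x where "u * ((x * v) * u) = u" and "star ((x * v) * u) = (x * v) * u"
    using assms unfolding left_dual_core_invertible_def by (auto simp: mult.assoc)
  then have "u = u * star u * star v * star x"
    by (auto dest: eq_mult_star_if_hermitian_right_unit simp: mult.assoc)
  then show ?thesis by blast
qed

lemma left_dual_bc_core_invertible_imp_right_factor:
  assumes "left_dual_bc_core_invertible star u b c"
  shows "\<exists>s. b = b * star b * star u * s"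
proof -
  obtain x where "b * ((x * u) * b) = b" and "star ((x * u) * b) = (x * u) * b"
    using assms unfolding left_dual_bc_core_invertible_def by (auto simp: mult.assoc)
  then have "b = b * star b * star u * star x"
    by (auto dest: eq_mult_star_if_hermitian_right_unit simp: mult.assoc)
  then show ?thesis by blast
qed

lemma left_bc_invertible_iff_right_factor:
  "left_bc_invertible u b c \<longleftrightarrow> (\<exists>s. star b = star b * star u * star c * s)"
proof
  assume "left_bc_invertible u b c"
  then obtain r where "b = r * c * u * b" unfolding left_bc_invertible_def by blast
  then have "star b = star b * star u * star c * star r"
    by (metis star_mult mult.assoc)
  then show "\<exists>s. star b = star b * star u * star c * s" by blast
next
  assume "\<exists>s. star b = star b * star u * star c * s"
  then obtain s where "star b = star b * star u * star c * s" by blast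
  then have "b = star s * c * u * b"
    by (metis star_mult star_star mult.assoc)
  then show "left_bc_invertible u b c" unfolding left_bc_invertible_def by blast
qed

lemma ex_hermitian_right_inner_inverse:
  assumes a_eq: "a = a * star a * t"
  shows "\<exists>z. a * z * a = a \<and> star (z * a) = z * a"
proof -
  have "a * (star a * t * star t) * a = a * (star a * t * star t) * (a * star a * t)"
    by (simp only: a_eq[symmetric])
  also have "\<dots> = (a * star a * t) * star (a * star a * t) * t"
    by (simp add: mult.assoc)
  also have "\<dots> = a"
    by (simp only: a_eq[symmetric])
  finally show ?thesis
    by (intro exI[of _ "star a * t * star t"]) (simp add: mult.assoc)
qed

lemma ex_hermitian_left_inner_inverse:
  assumes a_eq: "a = r * star a * a"
  shows "\<exists>w. a * w * a = a \<and> star (a * w) = a * w"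
proof -
  have "a * (star r * r * star a) * a = (r * star a * a) * (star r * r * star a) * a"
    by (simp only: a_eq[symmetric])
  also have "\<dots> = r * star (r * star a * a) * (r * star a * a)"
    by (simp add: mult.assoc)
  also have "\<dots> = a"
    by (simp only: a_eq[symmetric])
  finally show ?thesis
    by (intro exI[of _ "star r * r * star a"]) (simp add: mult.assoc)
qed

lemma MP_invertible_if_hermitian_inner_inverses:
  assumes z: "a * z * a = a" "star (z * a) = z * a"
    and w: "a * w * a = a" "star (a * w) = a * w"
  shows "MP_invertible star a"
  unfolding MP_invertible_def
proof (intro exI conjI)
  have za: "z * a * w * a = z * a" and aw: "a * z * a * w = a * w"
    using z(1) w(1) by (metis mult.assoc)+
  show "a * (z * a * w) * a = a"
    using z(1) w(1) by (simp add: mult.assoc)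
  show "z * a * w * a * (z * a * w) = z * a * w"
    using za z(1) by (metis mult.assoc)
  show "star (a * (z * a * w)) = a * (z * a * w)"
    using aw w(2) by (simp add: mult.assoc)
  show "star (z * a * w * a) = z * a * w * a"
    using za z(2) by simp
qed

lemma left_factor_if_right_factor:
  assumes a_eq: "a = a * star a * a * s"
  shows "a = a * star s * star a * a"
proof -
  let ?b = "star a * a"
  have b_eq: "?b = ?b * ?b * s"
    using arg_cong[OF a_eq, of "(*) (star a)"] by (metis mult.assoc)
  then have b_eq': "?b = star s * ?b * ?b"
    using arg_cong[OF b_eq, of star] by (metis star_mult star_star mult.assoc)
  have "star s * ?b = star s * ?b * ?b * s"
    using arg_cong[OF b_eq, of "(*) (star s)"] by (metis mult.assoc)
  also have "\<dots> = ?b * s"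
    by (simp only: b_eq'[symmetric])
  finally have "star s * ?b = ?b * s" .
  then show ?thesis
    using a_eq by (simp add: mult.assoc)
qed

lemma MP_invertible_if_right_factor:
  assumes a_eq: "a = a * star a * a * s"
  shows "MP_invertible star a"
proof -
  have "a = a * star a * (a * s)"
    using a_eq by (simp add: mult.assoc)
  then obtain z where "a * z * a = a" "star (z * a) = z * a"
    using ex_hermitian_right_inner_inverse by blast
  moreover obtain w where "a * w * a = a" "star (a * w) = a * w"
    using ex_hermitian_left_inner_inverse left_factor_if_right_factor[OF a_eq] by blast
  ultimately show ?thesis
    by (rule MP_invertible_if_hermitian_inner_inverses)
qed

lemma MP_invertible_imp_left_dual_core_witness:
  assumes "MP_invertible star a"
  obtains x where "\<exists>r. x = r * a" and "a * x * star a * a = a"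
    and "star (x * star a * a) = x * star a * a" and "x ^ 2 * star a * a = x"
proof -
  obtain y where y: "a * y * a = a" "y * a * y = y"
    "star (a * y) = a * y" "star (y * a) = y * a"
    using assms unfolding MP_invertible_def by blast
  define x where "x = y * star y"
  have x_star_a_a: "x * star a * a = y * a"
    using y(1) y(3) by (simp add: x_def mult.assoc flip: star_mult)
  have y_star: "star y * y * a = star y"
    using arg_cong[OF y(2), of star] y(4) by (simp add: mult.assoc)
  show ?thesis
  proof
    show "\<exists>r. x = r * a"
      using y_star by (metis x_def mult.assoc)
    show "a * x * star a * a = a"
      using x_star_a_a y(1) by (simp add: mult.assoc)
    show "star (x * star a * a) = x * star a * a"
      using x_star_a_a y(4) by simp
    have "x ^ 2 * star a * a = y * (star y * y * a)"
      using x_star_a_a by (simp add: power2_eq_square x_def mult.assoc)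
    then show "x ^ 2 * star a * a = x"
      using y_star by (simp add: x_def)
  qed
qed

lemma MP_invertible_iff_left_dual_core_invertible:
  "MP_invertible star a \<longleftrightarrow> left_dual_core_invertible star a (star a)"
proof
  assume "MP_invertible star a"
  then show "left_dual_core_invertible star a (star a)"
    unfolding left_dual_core_invertible_def
    by (metis MP_invertible_imp_left_dual_core_witness)
next
  assume "left_dual_core_invertible star a (star a)"
  then show "MP_invertible star a"
    using left_dual_core_invertible_imp_right_factor MP_invertible_if_right_factor by force
qed

lemma MP_invertible_iff_left_dual_bc_core_invertible:
  "MP_invertible star a \<longleftrightarrow> left_dual_bc_core_invertible star (star a) a a"
proof
  assume "MP_invertible star a"
  then show "left_dual_bc_core_invertible star (star a) a a"
    unfolding left_dual_bc_core_invertible_def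
    by (metis MP_invertible_imp_left_dual_core_witness)
next
  assume "left_dual_bc_core_invertible star (star a) a a"
  then show "MP_invertible star a"
    using left_dual_bc_core_invertible_imp_right_factor MP_invertible_if_right_factor by force
qed

lemma MP_invertible_iff_right_factor:
  "MP_invertible star a \<longleftrightarrow> (\<exists>s. a = a * star a * a * s)"
  using MP_invertible_iff_left_dual_core_invertible left_dual_core_invertible_imp_right_factor
    MP_invertible_if_right_factor by force

lemma MP_invertible_iff_left_bc_invertible:
  "MP_invertible star a \<longleftrightarrow> left_bc_invertible a (star a) (star a)"
  by (simp add: MP_invertible_iff_right_factor left_bc_invertible_iff_right_factor)

lemma MP_invertible_star_iff: "MP_invertible star (star a) \<longleftrightarrow> MP_invertible star a"
proof -
  have "MP_invertible star (star x)" if MP: "MP_invertible star x" for x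
  proof -
    obtain y where "x * y * x = x" "y * x * y = y" "star (x * y) = x * y" "star (y * x) = y * x"
      using MP unfolding MP_invertible_def by blast
    then have "star x * star y * star x = star x" "star y * star x * star y = star y"
      "star (star x * star y) = star x * star y" "star (star y * star x) = star y * star x"
      by (metis star_mult mult.assoc)+
    then show ?thesis unfolding MP_invertible_def by blast
  qed
  then show ?thesis by (metis star_star)
qed

end

theorem theorem3p10:
  fixes star :: "'a::ring_1 \<Rightarrow> 'a" and a :: 'a
  assumes "involution star"
  shows "(MP_invertible star a \<longleftrightarrow> left_dual_core_invertible star a (star a))
       \<and> (MP_invertible star a \<longleftrightarrow> left_dual_core_invertible star (star a) a)
       \<and> (MP_invertible star a \<longleftrightarrow> left_dual_bc_core_invertible star a (star a) (star a))
       \<and> (MP_invertible star a \<longleftrightarrow> left_bc_invertible a (star a) (star a))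
       \<and> (MP_invertible star a \<longleftrightarrow> left_dual_bc_core_invertible star (star a) a a)
       \<and> (MP_invertible star a \<longleftrightarrow> left_bc_invertible (star a) a a)"
proof -
  note MP_invertible_star_iff[OF assms, of a, symmetric]
    and MP_invertible_iff_left_dual_core_invertible[OF assms, of "star a"]
    MP_invertible_iff_left_dual_bc_core_invertible[OF assms, of "star a"]
    MP_invertible_iff_left_bc_invertible[OF assms, of "star a"]
  then show ?thesis
    using MP_invertible_iff_left_dual_core_invertible[OF assms, of a]
      MP_invertible_iff_left_bc_invertible[OF assms, of a]
      MP_invertible_iff_left_dual_bc_core_invertible[OF assms, of a]
    by (simp only: star_star[OF assms])
qed

end
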